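(* For every $N\ge3$, $\mathcal G_1(N)\cap\mathcal G_2(N)=\emptyset$.
   Context: Board and moves: $G=(V,E)$ finite, simple, connected, undirected; $N\ge3$ tokens, cops $C_1,\dots,C_{N-1}$ and robber $R$ (token $N$). A state is $s=(x^1,\dots,x^N,n)$ with $x^i\in V$ the position of token $i$ and $n$ the token to move; $S^n$ is the set of states with token $n$ to move; $s$ is a capture state if $x^i=x^N$ for some $i\le N-1$, and $S_{nc}$ is the set of noncapture states. In each turn the token to move moves to a vertex of its closed neighbourhood; order $C_1,\dots,C_{N-1},R,C_1,\dots$. State cop number. For $s\in S_{nc}$, $c(G|s)=c_N(G|s)$ is the minimum $k\in\{1,\dots,N-1\}$ for which there exist $k$ cops and strategies for them such that, starting from $s$, a capture (by any cop) occurs whatever the other $N-k$ tokens (including $R$) do; $c(G|s)=\infty$ if no such $k$ exists. $c(G)$ is the classical cop number of $G$. Graph classes. $\mathcal G(N)=\{G: c(G)>N-1\}$; $\mathcal G_1(N)=\{G\in\mathcal G(N):\exists s\in S_{nc}\text{ with } c(G|s)\in\{2,\dots,N-1\}\}$; $\mathcal G_2(N)=\{G\in\mathcal G(N): c(G|s)=\infty\text{ for all } s\in S^N\cap S_{nc}\}$. *)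

theory Defs
  imports Main "HOL-Library.Extended_Nat"
begin

type_synonym 'v graph = "'v set \<times> ('v \<Rightarrow> 'v \<Rightarrow> bool)"

definition fin_simple_connected_graph :: "'v graph \<Rightarrow> bool" where
  "fin_simple_connected_graph G \<longleftrightarrow>
     (let V = fst G; E = snd G in
      finite V \<and> V \<noteq> {} \<and>
      (\<forall>u w. E u w \<longrightarrow> u \<in> V \<and> w \<in> V) \<and>
      (\<forall>u w. E u w \<longrightarrow> E w u) \<and>
      (\<forall>u. \<not> E u u) \<and>
      (\<forall>u\<in>V. \<forall>w\<in>V. E\<^sup>*\<^sup>* u w))"

definition cnbr :: "'v graph \<Rightarrow> 'v \<Rightarrow> 'v set" where
  "cnbr G u = insert u {w. snd G u w}"

text \<open>State: cop positions (list of length k), robber position, and whether it is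
the cops' turn.\<close>

inductive classical_cops_force :: "'v graph \<Rightarrow> 'v list \<Rightarrow> 'v \<Rightarrow> bool \<Rightarrow> bool"
  for G where
  caught: "r \<in> set p \<Longrightarrow> classical_cops_force G p r t"
| cops_move: "\<lbrakk> r \<notin> set p; length p' = length p;
                \<forall>i<length p. p' ! i \<in> cnbr G (p ! i);
                classical_cops_force G p' r False \<rbrakk>
              \<Longrightarrow> classical_cops_force G p r True"
| robber_move: "\<lbrakk> r \<notin> set p; \<forall>r'\<in>cnbr G r. classical_cops_force G p r' True \<rbrakk>
              \<Longrightarrow> classical_cops_force G p r False"

definition cops_win :: "'v graph \<Rightarrow> nat \<Rightarrow> bool" where
  "cops_win G k \<longleftrightarrow> (\<exists>p. length p = k \<and> set p \<subseteq> fst G \<and>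
       (\<forall>r\<in>fst G. classical_cops_force G p r True))"

definition cop_number :: "'v graph \<Rightarrow> nat" where
  "cop_number G = (LEAST k. cops_win G k)"

text \<open>Tokens are 1..N; tokens 1..N-1 are cops, token N is the robber.
A state is (x, n): x i is the position of token i, n the token to move.\<close>

type_synonym 'v state = "(nat \<Rightarrow> 'v) \<times> nat"

definition valid_state :: "'v graph \<Rightarrow> nat \<Rightarrow> 'v state \<Rightarrow> bool" where
  "valid_state G N s \<longleftrightarrow> (\<forall>i\<in>{1..N}. fst s i \<in> fst G) \<and> snd s \<in> {1..N}"

definition is_capture :: "nat \<Rightarrow> 'v state \<Rightarrow> bool" where
  "is_capture N s \<longleftrightarrow> (\<exists>i\<in>{1..N-1}. fst s i = fst s N)"

definition next_tok :: "nat \<Rightarrow> nat \<Rightarrow> nat" where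
  "next_tok N n = (if n < N then n + 1 else 1)"

inductive forces_capture :: "'v graph \<Rightarrow> nat \<Rightarrow> nat set \<Rightarrow> 'v state \<Rightarrow> bool"
  for G N K where
  capture: "is_capture N (x, n) \<Longrightarrow> forces_capture G N K (x, n)"
| coalition_move: "\<lbrakk> \<not> is_capture N (x, n); n \<in> K; v \<in> cnbr G (x n);
                     forces_capture G N K (x(n := v), next_tok N n) \<rbrakk>
                   \<Longrightarrow> forces_capture G N K (x, n)"
| other_move: "\<lbrakk> \<not> is_capture N (x, n); n \<notin> K;
                 \<forall>v\<in>cnbr G (x n). forces_capture G N K (x(n := v), next_tok N n) \<rbrakk>
               \<Longrightarrow> forces_capture G N K (x, n)"

definition k_cops_force :: "'v graph \<Rightarrow> nat \<Rightarrow> nat \<Rightarrow> 'v state \<Rightarrow> bool" where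
  "k_cops_force G N k s \<longleftrightarrow>
     (\<exists>K. K \<subseteq> {1..N-1} \<and> card K = k \<and> forces_capture G N K s)"

definition state_cop_number :: "'v graph \<Rightarrow> nat \<Rightarrow> 'v state \<Rightarrow> enat" where
  "state_cop_number G N s =
     (if \<exists>k\<in>{1..N-1}. k_cops_force G N k s
      then enat (LEAST k. k \<in> {1..N-1} \<and> k_cops_force G N k s)
      else \<infinity>)"

definition GN :: "nat \<Rightarrow> 'v graph set" where
  "GN N = {G. fin_simple_connected_graph G \<and> cop_number G > N - 1}"

definition G1 :: "nat \<Rightarrow> 'v graph set" where
  "G1 N = {G \<in> GN N. \<exists>s. valid_state G N s \<and> \<not> is_capture N s \<and>
                        state_cop_number G N s \<in> enat ` {2..N-1}}"

definition G2 :: "nat \<Rightarrow> 'v graph set" where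
  "G2 N = {G \<in> GN N. \<forall>s. valid_state G N s \<and> snd s = N \<and> \<not> is_capture N s
                         \<longrightarrow> state_cop_number G N s = \<infinity>}"

end

theory Submission
  imports Defs
begin

text \<open>Let \<open>K\<close> be a coalition of \<open>k \<ge> 2\<close> cops forcing capture from a noncapture state \<open>s\<close>.
  Follow the play in which the coalition plays its winning strategy and every other token stays
  put, up to the robber's next turn. If a capture happens on the way, some coalition cop \<open>j\<close>
  still to move before the robber was adjacent to the robber in \<open>s\<close>, and then cop \<open>j\<close> alone
  captures from \<open>s\<close>, so \<open>c(G|s) = 1\<close>. Otherwise we reach a noncapture state with the robber to
  move from which \<open>K\<close> still forces capture, so its state cop number is finite and \<open>G\<close> is not in \<open>G2 N\<close>.\<close>

lemma cnbr_subset_vertices: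
  assumes "fin_simple_connected_graph G" "u \<in> fst G"
  shows "cnbr G u \<subseteq> fst G"
  using assms unfolding fin_simple_connected_graph_def Let_def cnbr_def by auto

lemma next_tok_less: "n < N \<Longrightarrow> next_tok N n = n + 1"
  by (simp add: next_tok_def)

lemma capture_after_move_eq_robber:
  assumes "\<not> is_capture N (x, n)" "n < N" "is_capture N (x(n := v), m)"
  shows "v = x N"
proof -
  obtain i where "i \<in> {1..N-1}" "(x(n := v)) i = (x(n := v)) N"
    using assms(3) unfolding is_capture_def by auto
  with assms(1,2) show ?thesis
    unfolding is_capture_def by (cases "i = n") auto
qed

lemma adjacent_cop_forces_capture:
  assumes "1 \<le> j" "j < N" "x N \<in> cnbr G (x j)" "n \<le> j"
  shows "forces_capture G N {j} (x, n)"
  using assms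
proof (induction "j - n" arbitrary: x n)
  case 0
  show ?case
  proof (cases "is_capture N (x, n)")
    case False
    have "n = j" using 0 by simp
    then have "is_capture N (x(n := x N), next_tok N n)"
      using 0 unfolding is_capture_def by auto
    then show ?thesis
      using forces_capture.coalition_move[OF False, of "{j}" "x N"] forces_capture.capture
        \<open>n = j\<close> 0 by (metis prod.collapse singletonI)
  qed (rule forces_capture.capture)
next
  case (Suc m)
  show ?case
  proof (cases "is_capture N (x, n)")
    case False
    have "n < j" using Suc.hyps(2) by simp
    have "forces_capture G N {j} (x(n := v), next_tok N n)" for v
    proof -
      have "(x(n := v)) N \<in> cnbr G ((x(n := v)) j)" using Suc.prems \<open>n < j\<close> by simp
      then show ?thesis
        using Suc.hyps(1)[of "n + 1" "x(n := v)"] Suc.hyps(2) Suc.prems \<open>n < j\<close>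
        by (simp add: next_tok_less)
    qed
    moreover have "n \<notin> {j}" using Suc by simp
    ultimately show ?thesis using False by (blast intro: forces_capture.other_move)
  qed (rule forces_capture.capture)
qed

text \<open>The play in which every token outside the coalition stays put.\<close>

lemma forces_capture_reaches_robber_turn:
  assumes G: "fin_simple_connected_graph G"
  shows "forces_capture G N K (x, n) \<Longrightarrow> valid_state G N (x, n) \<Longrightarrow> \<not> is_capture N (x, n) \<Longrightarrow>
    (\<exists>j\<in>K. n \<le> j \<and> j < N \<and> x N \<in> cnbr G (x j)) \<or>
    (\<exists>y. valid_state G N (y, N) \<and> \<not> is_capture N (y, N) \<and> forces_capture G N K (y, N))"
proof (induction "N - n" arbitrary: x n)
  case 0
  then show ?case unfolding valid_state_def by auto
next
  case (Suc m)
  have "n < N" "m = N - (n + 1)" using Suc.hyps(2) by auto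
  have IH: "(\<exists>j\<in>K. n + 1 \<le> j \<and> j < N \<and> y N \<in> cnbr G (y j)) \<or>
      (\<exists>y. valid_state G N (y, N) \<and> \<not> is_capture N (y, N) \<and> forces_capture G N K (y, N))"
    if "forces_capture G N K (y, n + 1)" "valid_state G N (y, n + 1)" "\<not> is_capture N (y, n + 1)"
    for y
    using Suc.hyps(1)[OF \<open>m = N - (n + 1)\<close>] that by simp
  from Suc.prems(1) show ?case
  proof (cases rule: forces_capture.cases)
    case capture
    then show ?thesis using Suc.prems(3) by simp
  next
    case (coalition_move v)
    show ?thesis
    proof (cases "is_capture N (x(n := v), n + 1)")
      case True
      then have "v = x N"
        by (rule capture_after_move_eq_robber[OF Suc.prems(3) \<open>n < N\<close>])
      then show ?thesis using coalition_move \<open>n < N\<close> by auto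
    next
      case False
      have "x n \<in> fst G" using Suc.prems(2) unfolding valid_state_def by auto
      then have "v \<in> fst G" using coalition_move(3) cnbr_subset_vertices[OF G] by blast
      then have "valid_state G N (x(n := v), n + 1)"
        using Suc.prems(2) \<open>n < N\<close> unfolding valid_state_def by auto
      then show ?thesis
        using IH[of "x(n := v)"] coalition_move(4) False \<open>n < N\<close>
        by (auto simp: next_tok_less)
    qed
  next
    case other_move
    have "forces_capture G N K (x, n + 1)"
      using other_move \<open>n < N\<close> by (fastforce simp: next_tok_less cnbr_def)
    moreover have "valid_state G N (x, n + 1)" "\<not> is_capture N (x, n + 1)"
      using Suc.prems(2,3) \<open>n < N\<close> unfolding valid_state_def is_capture_def by auto
    ultimately show ?thesis using IH[of x] by auto
  qed
qed

lemma state_cop_number_eq_enatD: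
  assumes "state_cop_number G N s = enat k"
  shows "k_cops_force G N k s" "\<And>k'. k' \<in> {1..N-1} \<Longrightarrow> k' < k \<Longrightarrow> \<not> k_cops_force G N k' s"
proof -
  have ex: "\<exists>k\<in>{1..N-1}. k_cops_force G N k s"
    using assms unfolding state_cop_number_def by (auto split: if_splits)
  then have k: "k = (LEAST k. k \<in> {1..N-1} \<and> k_cops_force G N k s)"
    using assms unfolding state_cop_number_def by simp
  show "k_cops_force G N k s"
    using ex unfolding k by (metis (mono_tags, lifting) LeastI)
  show "\<not> k_cops_force G N k' s" if "k' \<in> {1..N-1}" "k' < k" for k'
    using that not_less_Least unfolding k by blast
qed

lemma state_cop_number_finite:
  "k \<in> {1..N-1} \<Longrightarrow> k_cops_force G N k s \<Longrightarrow> state_cop_number G N s \<noteq> \<infinity>"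
  unfolding state_cop_number_def by auto

theorem mainTheorem8:
  fixes N :: nat
  assumes "N \<ge> 3"
  shows "G1 N \<inter> G2 N = ({} :: 'v graph set)"
proof (rule ccontr)
  assume "G1 N \<inter> G2 N \<noteq> ({} :: 'v graph set)"
  then obtain G :: "'v graph" where "G \<in> G1 N" and G2: "G \<in> G2 N" by blast
  then obtain x n k where G: "fin_simple_connected_graph G" and s: "valid_state G N (x, n)"
    "\<not> is_capture N (x, n)" and k: "k \<in> {2..N-1}" "state_cop_number G N (x, n) = enat k"
    unfolding G1_def GN_def by force
  obtain K where K: "K \<subseteq> {1..N-1}" "card K = k" "forces_capture G N K (x, n)"
    using state_cop_number_eq_enatD(1)[OF k(2)] unfolding k_cops_force_def by blast
  consider (adjacent) j where "j \<in> K" "n \<le> j" "j < N" "x N \<in> cnbr G (x j)"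
    | (robber_turn) y where "valid_state G N (y, N)" "\<not> is_capture N (y, N)"
        "forces_capture G N K (y, N)"
    using forces_capture_reaches_robber_turn[OF G K(3) s] by blast
  then show False
  proof cases
    case adjacent
    then have "k_cops_force G N 1 (x, n)"
      using adjacent_cop_forces_capture[of j N x G n] K(1) unfolding k_cops_force_def
      by (intro exI[of _ "{j}"]) auto
    then show False using state_cop_number_eq_enatD(2)[OF k(2), of 1] k(1) by auto
  next
    case robber_turn
    then have "state_cop_number G N (y, N) \<noteq> \<infinity>"
      using state_cop_number_finite[of k N G] K k(1) unfolding k_cops_force_def by auto
    then show False using G2 robber_turn unfolding G2_def by auto
  qed
qed

end
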